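(* Let $\Delta\vdash t$ be a closed nominal term-in-context and $\hat t=\mathcal{T}(\Delta,t)$. For each occurrence of a variable $X$ in $t$ there is a corresponding occurrence of the meta-variable $X$ in $\hat t$ (at the same position), and there exists $n$ such that all occurrences of $X$ in $\hat t$ are in meta-applications with exactly $n$ arguments.
   Context: Nominal terms: $s,t ::= a \mid \pi\cdot X \mid [a]s \mid f\,s \mid (s_1,\ldots,s_n)$ over atoms, variables, function symbols, finite-support permutations $\pi$ of atoms. A freshness context $\Delta$ is a set of constraints $a\#X$. $\Delta\vdash t$ is closed if: (1) every atom occurrence $a$ in $t$ lies under an abstraction $[a]$; (2) if $\pi\cdot X$ is in the scope of an abstraction of $\pi(a)$ then every occurrence $\pi'\cdot X$ of $X$ in $t$ is in the scope of an abstraction of $\pi'(a)$, or $a\#X\in\Delta$; (3) for two occurrences $\pi_1\cdot X,\pi_2\cdot X$ and $a$ with $\pi_1(a)\neq\pi_2(a)$, if $a$ is not abstracted in one of the occurrences then $a\#X\in\Delta$. Translation: $\Lambda_t(X)$ is the set of atoms $a$ such that some occurrence of $X$ in $t$ is in the scope of $[a]$. With a fixed total order on atoms, $\mathcal{T}(\Delta,t)$ is the CRS meta-term obtained from $t$ by replacing each occurrence $\pi\cdot X$ by the meta-application $X(\pi\cdot xs)$, where $xs$ is the ascending list of $\{\pi^{-1}(a)\mid a\in\Lambda_t(X)\}\setminus\{a\mid a\#X\in\Delta\}$ and $\pi\cdot xs$ applies $\pi$ elementwise (no arguments if empty); other constructs are kept unchanged. *)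

theory Defs
  imports "HOL-Combinatorics.Perm"
begin

datatype ('f, 'v) nterm =
    NAtom nat
  | NSusp "nat perm" 'v
  | NAbs nat "('f, 'v) nterm"
  | NFun 'f "('f, 'v) nterm"
  | NTup "('f, 'v) nterm list"

text \<open>CRS meta-terms: atoms become CRS variables; a meta-application of a
  meta-variable X to a list of (CRS) variables.\<close>
datatype ('f, 'v) mterm =
    MAtom nat
  | MApp 'v "nat list"
  | MAbs nat "('f, 'v) mterm"
  | MFun 'f "('f, 'v) mterm"
  | MTup "('f, 'v) mterm list"

type_synonym 'v fctx = "(nat \<times> 'v) set"  \<comment> \<open>(a, X) stands for a # X\<close>

fun var_occs :: "nat set \<Rightarrow> ('f, 'v) nterm \<Rightarrow> (nat set \<times> nat perm \<times> 'v) set" where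
  "var_occs B (NAtom a) = {}"
| "var_occs B (NSusp \<pi> X) = {(B, \<pi>, X)}"
| "var_occs B (NAbs a s) = var_occs (insert a B) s"
| "var_occs B (NFun f s) = var_occs B s"
| "var_occs B (NTup ss) = (\<Union>s \<in> set ss. var_occs B s)"

fun atom_occs :: "nat set \<Rightarrow> ('f, 'v) nterm \<Rightarrow> (nat set \<times> nat) set" where
  "atom_occs B (NAtom a) = {(B, a)}"
| "atom_occs B (NSusp \<pi> X) = {}"
| "atom_occs B (NAbs a s) = atom_occs (insert a B) s"
| "atom_occs B (NFun f s) = atom_occs B s"
| "atom_occs B (NTup ss) = (\<Union>s \<in> set ss. atom_occs B s)"

definition closed_nt :: "'v fctx \<Rightarrow> ('f, 'v) nterm \<Rightarrow> bool" where
  "closed_nt \<Delta> t \<longleftrightarrow>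
     (\<forall>(B, a) \<in> atom_occs {} t. a \<in> B) \<and>
     (\<forall>(B, \<pi>, X) \<in> var_occs {} t. \<forall>a. Perm.apply (\<pi>) a \<in> B \<longrightarrow>
        ((\<forall>(B', \<pi>', X') \<in> var_occs {} t. X' = X \<longrightarrow> Perm.apply (\<pi>') a \<in> B') \<or> (a, X) \<in> \<Delta>)) \<and>
     (\<forall>(B1, \<pi>1, X1) \<in> var_occs {} t. \<forall>(B2, \<pi>2, X2) \<in> var_occs {} t. \<forall>a.
        X1 = X2 \<and> Perm.apply (\<pi>1) a \<noteq> Perm.apply (\<pi>2) a \<and> (Perm.apply (\<pi>1) a \<notin> B1 \<or> Perm.apply (\<pi>2) a \<notin> B2)
        \<longrightarrow> (a, X1) \<in> \<Delta>)"

definition Lam :: "('f, 'v) nterm \<Rightarrow> 'v \<Rightarrow> nat set" where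
  "Lam t X = \<Union>{B. \<exists>\<pi>. (B, \<pi>, X) \<in> var_occs {} t}"

fun tr :: "('v \<Rightarrow> nat set) \<Rightarrow> 'v fctx \<Rightarrow> ('f, 'v) nterm \<Rightarrow> ('f, 'v) mterm" where
  "tr L \<Delta> (NAtom a) = MAtom a"
| "tr L \<Delta> (NSusp \<pi> X) =
     MApp X (map (\<lambda>b. Perm.apply (\<pi>) b)
       (sorted_list_of_set ((\<lambda>a. Perm.apply (inverse \<pi>) a) ` L X - {a. (a, X) \<in> \<Delta>})))"
| "tr L \<Delta> (NAbs a s) = MAbs a (tr L \<Delta> s)"
| "tr L \<Delta> (NFun f s) = MFun f (tr L \<Delta> s)"
| "tr L \<Delta> (NTup ss) = MTup (map (tr L \<Delta>) ss)"

definition translate :: "'v fctx \<Rightarrow> ('f, 'v) nterm \<Rightarrow> ('f, 'v) mterm" where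
  "translate \<Delta> t = tr (Lam t) \<Delta> t"

fun nsub :: "('f, 'v) nterm \<Rightarrow> nat list \<Rightarrow> ('f, 'v) nterm option" where
  "nsub t [] = Some t"
| "nsub (NAbs a s) (0 # p) = nsub s p"
| "nsub (NFun f s) (0 # p) = nsub s p"
| "nsub (NTup ss) (i # p) = (if i < length ss then nsub (ss ! i) p else None)"
| "nsub _ _ = None"

fun msub :: "('f, 'v) mterm \<Rightarrow> nat list \<Rightarrow> ('f, 'v) mterm option" where
  "msub t [] = Some t"
| "msub (MAbs a s) (0 # p) = msub s p"
| "msub (MFun f s) (0 # p) = msub s p"
| "msub (MTup ss) (i # p) = (if i < length ss then msub (ss ! i) p else None)"
| "msub _ _ = None"

end

theory Submission
  imports Defs
begin

text \<open>The translation only rewrites suspensions, so positions of t and of its translation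
  correspond exactly. For the arity, fix an atom a such that a # X is not in \<Delta>. By closedness,
  \<pi> a is abstracted above one occurrence \<pi>\<cdot>X iff \<pi>' a is abstracted above every occurrence
  \<pi>'\<cdot>X, and \<pi> a lies in \<Lambda>_t(X) only if it is abstracted above \<pi>\<cdot>X. Hence the argument
  list at every occurrence \<pi>\<cdot>X is the image under \<pi> of one and the same set of atoms.\<close>

lemma msub_tr: "msub (tr L \<Delta> t) p = map_option (tr L \<Delta>) (nsub t p)"
  by (induction t p rule: nsub.induct) auto

lemma tr_eq_MAppD: "tr L \<Delta> s = MApp X xs \<Longrightarrow> \<exists>\<pi>. s = NSusp \<pi> X"
  by (cases s) auto

lemma msub_translate_eq_MAppD:
  assumes "msub (translate \<Delta> t) p = Some (MApp X xs)"
  obtains \<pi> where "nsub t p = Some (NSusp \<pi> X)" and "tr (Lam t) \<Delta> (NSusp \<pi> X) = MApp X xs"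
proof -
  from assms obtain s where "nsub t p = Some s" and "tr (Lam t) \<Delta> s = MApp X xs"
    by (auto simp: translate_def msub_tr)
  moreover obtain \<pi> where "s = NSusp \<pi> X"
    using tr_eq_MAppD[OF \<open>tr (Lam t) \<Delta> s = MApp X xs\<close>] by blast
  ultimately show ?thesis
    using that by simp
qed

lemma var_occs_nsub:
  "nsub t p = Some (NSusp \<pi> X) \<Longrightarrow> \<exists>B. (B, \<pi>, X) \<in> var_occs B0 t"
proof (induction t p arbitrary: B0 rule: nsub.induct)
  case (4 ss i p)
  then have "i < length ss" and "nsub (ss ! i) p = Some (NSusp \<pi> X)"
    by (auto split: if_splits)
  with 4 show ?case by (fastforce intro: bexI[of _ "ss ! i"])
qed auto

lemma closed_nt_abstracted_transfer:
  assumes "closed_nt \<Delta> t" "(B1, \<pi>1, X) \<in> var_occs {} t" "(B2, \<pi>2, X) \<in> var_occs {} t"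
    "(a, X) \<notin> \<Delta>" "Perm.apply \<pi>1 a \<in> B1"
  shows "Perm.apply \<pi>2 a \<in> B2"
proof -
  from assms(1) have "\<forall>(B, \<pi>, X) \<in> var_occs {} t. \<forall>a. Perm.apply \<pi> a \<in> B \<longrightarrow>
      ((\<forall>(B', \<pi>', X') \<in> var_occs {} t. X' = X \<longrightarrow> Perm.apply \<pi>' a \<in> B') \<or> (a, X) \<in> \<Delta>)"
    unfolding closed_nt_def by (elim conjE) assumption
  then have "\<forall>(B', \<pi>', X') \<in> var_occs {} t. X' = X \<longrightarrow> Perm.apply \<pi>' a \<in> B'"
    using assms(2,4,5) by fastforce
  with assms(3) show ?thesis by fastforce
qed

lemma closed_nt_abstracted_iff:
  assumes "closed_nt \<Delta> t" "(B1, \<pi>1, X) \<in> var_occs {} t" "(B2, \<pi>2, X) \<in> var_occs {} t"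
    "(a, X) \<notin> \<Delta>"
  shows "Perm.apply \<pi>1 a \<in> B1 \<longleftrightarrow> Perm.apply \<pi>2 a \<in> B2"
  using closed_nt_abstracted_transfer[OF assms] closed_nt_abstracted_transfer[OF assms(1,3,2,4)]
  by blast

lemma closed_nt_abstracted_if_apply_differs:
  assumes "closed_nt \<Delta> t" "(B1, \<pi>1, X) \<in> var_occs {} t" "(B2, \<pi>2, X) \<in> var_occs {} t"
    "(a, X) \<notin> \<Delta>" "Perm.apply \<pi>1 a \<noteq> Perm.apply \<pi>2 a"
  shows "Perm.apply \<pi>1 a \<in> B1"
proof -
  from assms(1) have "\<forall>(B1, \<pi>1, X1) \<in> var_occs {} t. \<forall>(B2, \<pi>2, X2) \<in> var_occs {} t. \<forall>a.
      X1 = X2 \<and> Perm.apply \<pi>1 a \<noteq> Perm.apply \<pi>2 a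
        \<and> (Perm.apply \<pi>1 a \<notin> B1 \<or> Perm.apply \<pi>2 a \<notin> B2) \<longrightarrow> (a, X1) \<in> \<Delta>"
    unfolding closed_nt_def by (elim conjE) assumption
  with assms(2,3) have "Perm.apply \<pi>1 a \<noteq> Perm.apply \<pi>2 a
      \<and> (Perm.apply \<pi>1 a \<notin> B1 \<or> Perm.apply \<pi>2 a \<notin> B2) \<longrightarrow> (a, X) \<in> \<Delta>"
    by fastforce
  with assms(4,5) show ?thesis by blast
qed

definition shared_abstracted_atoms :: "'v fctx \<Rightarrow> ('f, 'v) nterm \<Rightarrow> 'v \<Rightarrow> nat set" where
  "shared_abstracted_atoms \<Delta> t X =
     {a. (a, X) \<notin> \<Delta> \<and> (\<forall>(B, \<pi>, X') \<in> var_occs {} t. X' = X \<longrightarrow> Perm.apply \<pi> a \<in> B)}"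

lemma image_apply_inverse: "(\<lambda>b. Perm.apply (inverse \<pi>) b) ` S = {a. Perm.apply \<pi> a \<in> S}"
proof -
  have "inj (Perm.apply \<pi>)" "surj (Perm.apply \<pi>)"
    by (simp_all add: bij_is_inj bij_is_surj)
  then show ?thesis
    by (auto simp: apply_inverse surj_f_inv_f intro: image_eqI[of _ _ "Perm.apply \<pi> _"])
qed

lemma tr_args_eq_shared_abstracted_atoms:
  assumes closed: "closed_nt \<Delta> t" and occ: "(B, \<pi>, X) \<in> var_occs {} t"
  shows "(\<lambda>b. Perm.apply (inverse \<pi>) b) ` Lam t X - {a. (a, X) \<in> \<Delta>}
       = shared_abstracted_atoms \<Delta> t X"
proof -
  have Lam_iff: "Perm.apply \<pi> a \<in> Lam t X \<longleftrightarrow> Perm.apply \<pi> a \<in> B" if fresh: "(a, X) \<notin> \<Delta>" for a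
  proof
    assume "Perm.apply \<pi> a \<in> Lam t X"
    then obtain B' \<pi>' where occ': "(B', \<pi>', X) \<in> var_occs {} t" and "Perm.apply \<pi> a \<in> B'"
      unfolding Lam_def by auto
    show "Perm.apply \<pi> a \<in> B"
    proof (cases "Perm.apply \<pi>' a = Perm.apply \<pi> a")
      case True
      with \<open>Perm.apply \<pi> a \<in> B'\<close> closed_nt_abstracted_iff[OF closed occ' occ fresh]
      show ?thesis by simp
    next
      case False
      with closed_nt_abstracted_if_apply_differs[OF closed occ occ' fresh] show ?thesis by simp
    qed
  qed (use occ in \<open>auto simp: Lam_def\<close>)
  have "(\<forall>(B', \<pi>', X') \<in> var_occs {} t. X' = X \<longrightarrow> Perm.apply \<pi>' a \<in> B')
      \<longleftrightarrow> Perm.apply \<pi> a \<in> B" if fresh: "(a, X) \<notin> \<Delta>" for a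
    using closed_nt_abstracted_iff[OF closed occ _ fresh] occ by fast
  with Lam_iff show ?thesis
    unfolding image_apply_inverse shared_abstracted_atoms_def by blast
qed

lemma tr_Lam_NSusp:
  assumes "closed_nt \<Delta> t" and "(B, \<pi>, X) \<in> var_occs {} t"
  shows "tr (Lam t) \<Delta> (NSusp \<pi> X)
       = MApp X (map (Perm.apply \<pi>) (sorted_list_of_set (shared_abstracted_atoms \<Delta> t X)))"
  using tr_args_eq_shared_abstracted_atoms[OF assms] by simp

theorem mainTheorem6:
  fixes \<Delta> :: "'v fctx" and t :: "('f, 'v) nterm"
  assumes "closed_nt \<Delta> t"
  shows "(\<forall>p \<pi> X. nsub t p = Some (NSusp \<pi> X) \<longrightarrow>
            (\<exists>xs. msub (translate \<Delta> t) p = Some (MApp X xs)))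
       \<and> (\<forall>X. \<exists>n. \<forall>p xs. msub (translate \<Delta> t) p = Some (MApp X xs) \<longrightarrow> length xs = n)"
proof (intro conjI allI impI)
  fix p \<pi> X
  assume "nsub t p = Some (NSusp \<pi> X)"
  then show "\<exists>xs. msub (translate \<Delta> t) p = Some (MApp X xs)"
    by (simp add: translate_def msub_tr)
next
  fix X
  have "length xs = card (shared_abstracted_atoms \<Delta> t X)"
    if sub: "msub (translate \<Delta> t) p = Some (MApp X xs)" for p xs
  proof -
    obtain \<pi> where nsub: "nsub t p = Some (NSusp \<pi> X)"
      and xs: "tr (Lam t) \<Delta> (NSusp \<pi> X) = MApp X xs"
      by (rule msub_translate_eq_MAppD[OF sub])
    obtain B where "(B, \<pi>, X) \<in> var_occs {} t"
      using var_occs_nsub[OF nsub] by blast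
    with xs show ?thesis
      using tr_Lam_NSusp[OF assms] by fastforce
  qed
  then show "\<exists>n. \<forall>p xs. msub (translate \<Delta> t) p = Some (MApp X xs) \<longrightarrow> length xs = n"
    by blast
qed

end
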